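(* Let $T$ be a complete $L$-theory and $\phi(x,y)$ an $L$-formula. Suppose there are infinite sequences $(a_i:i<\omega)$ and $(b_j:j<\omega)$ in some model of $T$, a natural number $N$ and a set $E\subseteq\{1,\ldots,N\}$ such that (i) for all $i_1<\cdots<i_N<\omega$, $\psi(a_{i_1},\ldots,a_{i_N})$ holds, where $$\psi(x_1,\ldots,x_N):=\neg\Big(\exists y\big(\bigwedge_{k\in E}\phi(x_k,y)\wedge\bigwedge_{k\in\{1,\ldots,N\}\setminus E}\neg\phi(x_k,y)\big)\Big);$$ (ii) $\phi(a_i,b_j)$ holds if and only if $i<j$. Then $T$ has the strict order property.
   Context: Let $\mathcal U$ be the monster model of $T$. A formula $\theta(x,y)$ (possibly in several variables) has the strict order property for $T$ if there is a sequence $(c_i:i<\omega)$ in $\mathcal U$ with $\theta(\mathcal U,c_i)\subsetneqq\theta(\mathcal U,c_{i+1})$ for all $i<\omega$. $T$ has the strict order property (SOP) if some $L$-formula has the strict order property for $T$. *)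

theory Defs
  imports Main
begin

text \<open>Function and relation symbols
 of the language L are elements of the types 'f and 'p; they are applied to
 argument lists (arities are not constrained, which only makes the setting
 more general).\<close>

datatype 'f trm = Var nat | Fn 'f "'f trm list"

datatype ('f, 'p) fm =
    FFalse
  | FEq "'f trm" "'f trm"
  | FRel 'p "'f trm list"
  | FNot "('f, 'p) fm"
  | FAnd "('f, 'p) fm" "('f, 'p) fm"
  | FEx nat "('f, 'p) fm"

record ('a, 'f, 'p) struct =
  dom :: "'a set"
  fint :: "'f \<Rightarrow> 'a list \<Rightarrow> 'a"
  rint :: "'p \<Rightarrow> 'a list \<Rightarrow> bool"

definition is_struct :: "('a, 'f, 'p) struct \<Rightarrow> bool" where
  "is_struct M \<longleftrightarrow> dom M \<noteq> {} \<and>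
     (\<forall>f as. set as \<subseteq> dom M \<longrightarrow> fint M f as \<in> dom M)"

fun tval :: "('a, 'f, 'p) struct \<Rightarrow> (nat \<Rightarrow> 'a) \<Rightarrow> 'f trm \<Rightarrow> 'a" where
  "tval M e (Var v) = e v"
| "tval M e (Fn f ts) = fint M f (map (tval M e) ts)"

fun sat :: "('a, 'f, 'p) struct \<Rightarrow> (nat \<Rightarrow> 'a) \<Rightarrow> ('f, 'p) fm \<Rightarrow> bool" where
  "sat M e FFalse = False"
| "sat M e (FEq s t) = (tval M e s = tval M e t)"
| "sat M e (FRel p ts) = rint M p (map (tval M e) ts)"
| "sat M e (FNot \<phi>) = (\<not> sat M e \<phi>)"
| "sat M e (FAnd \<phi> \<psi>) = (sat M e \<phi> \<and> sat M e \<psi>)"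
| "sat M e (FEx x \<phi>) = (\<exists>a\<in>dom M. sat M (e(x := a)) \<phi>)"

fun fvt :: "'f trm \<Rightarrow> nat set" where
  "fvt (Var v) = {v}"
| "fvt (Fn f ts) = (\<Union>t\<in>set ts. fvt t)"

fun fv :: "('f, 'p) fm \<Rightarrow> nat set" where
  "fv FFalse = {}"
| "fv (FEq s t) = fvt s \<union> fvt t"
| "fv (FRel p ts) = (\<Union>t\<in>set ts. fvt t)"
| "fv (FNot \<phi>) = fv \<phi>"
| "fv (FAnd \<phi> \<psi>) = fv \<phi> \<union> fv \<psi>"
| "fv (FEx x \<phi>) = fv \<phi> - {x}"

text \<open>A formula \<phi>(x,y) with x an n-tuple and y an m-tuple of variables:
 x is the variables 0..n-1, y the variables n..n+m-1.\<close>
definition is_formula2 :: "nat \<Rightarrow> nat \<Rightarrow> ('f, 'p) fm \<Rightarrow> bool" where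
  "is_formula2 n m \<phi> \<longleftrightarrow> fv \<phi> \<subseteq> {..<n+m}"

definition asg2 :: "nat \<Rightarrow> 'a list \<Rightarrow> 'a list \<Rightarrow> nat \<Rightarrow> 'a" where
  "asg2 n a b v = (if v < n then a ! v else b ! (v - n))"

definition holds2 :: "('a, 'f, 'p) struct \<Rightarrow> nat \<Rightarrow> ('f, 'p) fm \<Rightarrow> 'a list \<Rightarrow> 'a list \<Rightarrow> bool" where
  "holds2 M n \<phi> a b \<longleftrightarrow> sat M (asg2 n a b) \<phi>"

definition tuple :: "('a, 'f, 'p) struct \<Rightarrow> nat \<Rightarrow> 'a list \<Rightarrow> bool" where
  "tuple M k a \<longleftrightarrow> length a = k \<and> set a \<subseteq> dom M"

definition defset :: "('a, 'f, 'p) struct \<Rightarrow> nat \<Rightarrow> ('f, 'p) fm \<Rightarrow> 'a list \<Rightarrow> 'a list set" where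
  "defset M n \<theta> c = {x. tuple M n x \<and> holds2 M n \<theta> x c}"

text \<open>Since the monster
 model of Th(M) cannot be formalized, we use the standard equivalent (by
 compactness/saturation): some formula \<theta>(x,y) has strict chains of every finite
 length in M (equivalently, the corresponding sentences belong to Th(M)).\<close>
definition Th_has_SOP :: "('a, 'f, 'p) struct \<Rightarrow> bool" where
  "Th_has_SOP M \<longleftrightarrow> (\<exists>n m (\<theta> :: ('f, 'p) fm). is_formula2 n m \<theta> \<and>
     (\<forall>k. \<exists>c. (\<forall>i\<le>k. tuple M m (c i)) \<and>
        (\<forall>i<k. defset M n \<theta> (c i) \<subset> defset M n \<theta> (c (Suc i)))))"

end

(* By Ramsey's theorem, pass to a subsequence of (a_i) along which, for every pattern
   P \<subseteq> {1..N}, whether some y satisfies exactly those \<phi>(a_(i_k), y) with k \<in> P does not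
   depend on the increasing tuple i_1 < ... < i_N.  The b_j realize all initial segments {1..t}
   while E is never realized, so some omitted pattern P with k \<notin> P and k + 1 \<in> P becomes
   realized when k + 1 is moved down to k.  Let \<theta>(y; z) assert the pattern P at all positions
   except k + 1, and let only the parameter at position k run through the subsequence.  A
   solution of \<theta> for the i-th parameter cannot satisfy \<phi> at the next element of the
   subsequence, since P is omitted; so it is a solution for the (i+1)-st parameter, and the
   realized swapped pattern shows that the inclusion is strict. *)

theory Submission
  imports Defs "HOL-Library.Ramsey"
begin

fun rename_trm :: "(nat \<Rightarrow> nat) \<Rightarrow> 'f trm \<Rightarrow> 'f trm" where
  "rename_trm \<pi> (Var v) = Var (\<pi> v)"
| "rename_trm \<pi> (Fn f ts) = Fn f (map (rename_trm \<pi>) ts)"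

fun rename_fm :: "(nat \<Rightarrow> nat) \<Rightarrow> ('f, 'p) fm \<Rightarrow> ('f, 'p) fm" where
  "rename_fm \<pi> FFalse = FFalse"
| "rename_fm \<pi> (FEq s t) = FEq (rename_trm \<pi> s) (rename_trm \<pi> t)"
| "rename_fm \<pi> (FRel p ts) = FRel p (map (rename_trm \<pi>) ts)"
| "rename_fm \<pi> (FNot \<phi>) = FNot (rename_fm \<pi> \<phi>)"
| "rename_fm \<pi> (FAnd \<phi> \<psi>) = FAnd (rename_fm \<pi> \<phi>) (rename_fm \<pi> \<psi>)"
| "rename_fm \<pi> (FEx x \<phi>) = FEx (\<pi> x) (rename_fm \<pi> \<phi>)"

lemma tval_rename_trm: "tval M e (rename_trm \<pi> t) = tval M (e \<circ> \<pi>) t"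
  by (induction t) (auto cong: map_cong)

lemma fvt_rename_trm: "fvt (rename_trm \<pi> t) = \<pi> ` fvt t"
  by (induction t) auto

lemma sat_rename_fm:
  assumes "inj \<pi>"
  shows "sat M e (rename_fm \<pi> \<phi>) \<longleftrightarrow> sat M (e \<circ> \<pi>) \<phi>"
proof (induction \<phi> arbitrary: e)
  case (FEx x \<phi>)
  have "(e(\<pi> x := d)) \<circ> \<pi> = (e \<circ> \<pi>)(x := d)" for d
    using assms by (auto simp: fun_eq_iff inj_eq)
  then have "sat M (e(\<pi> x := d)) (rename_fm \<pi> \<phi>) \<longleftrightarrow> sat M ((e \<circ> \<pi>)(x := d)) \<phi>" for d
    by (simp only: FEx.IH)
  then show ?case by (simp add: comp_def)
qed (auto simp: tval_rename_trm comp_def)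

lemma fv_rename_fm: "inj \<pi> \<Longrightarrow> fv (rename_fm \<pi> \<phi>) = \<pi> ` fv \<phi>"
  by (induction \<phi>) (auto simp: fvt_rename_trm image_set_diff)

lemma tval_cong: "\<forall>v\<in>fvt t. e v = e' v \<Longrightarrow> tval M e t = tval M e' t"
  by (induction t) (auto cong: map_cong)

lemma sat_cong: "\<forall>v\<in>fv \<phi>. e v = e' v \<Longrightarrow> sat M e \<phi> \<longleftrightarrow> sat M e' \<phi>"
proof (induction \<phi> arbitrary: e e')
  case (FEq s t)
  then show ?case using tval_cong[of s e e' M] tval_cong[of t e e' M] by simp
next
  case (FRel p ts)
  then have "tval M e t = tval M e' t" if "t \<in> set ts" for t
    using that by (intro tval_cong) auto
  then show ?case by (simp cong: map_cong)
next
  case (FAnd \<phi> \<psi>)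
  have "sat M e \<phi> \<longleftrightarrow> sat M e' \<phi>" "sat M e \<psi> \<longleftrightarrow> sat M e' \<psi>"
    by (intro FAnd.IH; use FAnd.prems in auto)+
  then show ?case by simp
next
  case (FEx x \<phi>)
  have "sat M (e(x := d)) \<phi> \<longleftrightarrow> sat M (e'(x := d)) \<phi>" for d
    by (intro FEx.IH; use FEx.prems in auto)
  then show ?case by simp
qed simp_all

fun conj_list :: "('f, 'p) fm list \<Rightarrow> ('f, 'p) fm" where
  "conj_list [] = FNot FFalse"
| "conj_list (\<phi> # \<phi>s) = FAnd \<phi> (conj_list \<phi>s)"

lemma sat_conj_list: "sat M e (conj_list \<phi>s) \<longleftrightarrow> (\<forall>\<phi>\<in>set \<phi>s. sat M e \<phi>)"
  by (induction \<phi>s) auto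

lemma fv_conj_list: "fv (conj_list \<phi>s) = (\<Union>\<phi>\<in>set \<phi>s. fv \<phi>)"
  by (induction \<phi>s) auto

definition lit :: "bool \<Rightarrow> ('f, 'p) fm \<Rightarrow> ('f, 'p) fm" where
  "lit s \<phi> = (if s then \<phi> else FNot \<phi>)"

lemma sat_lit: "sat M e (lit s \<phi>) \<longleftrightarrow> (sat M e \<phi> \<longleftrightarrow> s)"
  by (simp add: lit_def)

lemma fv_lit: "fv (lit s \<phi>) = fv \<phi>"
  by (simp add: lit_def)

(* Renaming of \<phi>(x, y) into the l-th conjunct of \<theta>(y; z_0 ... z_(L-1)): x goes to the
   parameter block z_l and y to the object variables of \<theta>; all other variables are moved
   out of the way, since bound variables are renamed too and the renaming must be injective. *)
definition block_ren :: "nat \<Rightarrow> nat \<Rightarrow> nat \<Rightarrow> nat \<Rightarrow> nat" where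
  "block_ren n m l v = (if v < n then m + l * n + v else if v < n + m then v - n else v + m + l * n)"

lemma inj_block_ren: "inj (block_ren n m l)"
  unfolding inj_def block_ren_def by auto

lemma block_ren_less:
  assumes "l < L" "v < n + m"
  shows "block_ren n m l v < m + L * n"
proof -
  have "l * n + n \<le> L * n"
    using mult_le_mono1[of "Suc l" L n] assms(1) by simp
  then show ?thesis
    using assms(2) by (auto simp: block_ren_def)
qed

definition block_pattern_fm ::
  "nat \<Rightarrow> nat \<Rightarrow> ('f, 'p) fm \<Rightarrow> nat \<Rightarrow> nat set \<Rightarrow> nat set \<Rightarrow> ('f, 'p) fm" where
  "block_pattern_fm n m \<phi> L Q P =
     conj_list [lit (l \<in> P) (rename_fm (block_ren n m l) \<phi>). l \<leftarrow> [0..<L], l \<in> Q]"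

lemma is_formula2_block_pattern_fm:
  assumes "is_formula2 n m \<phi>"
  shows "is_formula2 m (L * n) (block_pattern_fm n m \<phi> L Q P)"
proof -
  have "block_ren n m l v < m + L * n" if "l < L" "v \<in> fv \<phi>" for l v
    using assms that block_ren_less by (auto simp: is_formula2_def)
  then show ?thesis
    by (auto simp: is_formula2_def block_pattern_fm_def fv_conj_list fv_lit fv_rename_fm[OF inj_block_ren])
qed

lemma length_concat_blocks:
  "\<forall>l<L. length (B l) = n \<Longrightarrow> length (concat (map B [0..<L])) = L * n"
  by (induction L) auto

lemma nth_concat_blocks:
  assumes "\<forall>l<L. length (B l) = n" "l < L" "v < n"
  shows "concat (map B [0..<L]) ! (l * n + v) = B l ! v"
  using assms
proof (induction L)
  case (Suc L)
  have len: "length (concat (map B [0..<L])) = L * n"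
    using Suc.prems(1) by (simp add: length_concat_blocks)
  show ?case
  proof (cases "l < L")
    case True
    then have "l * n + v < L * n"
      using Suc.prems(3) mult_le_mono1[of "Suc l" L n] by simp
    with Suc True len show ?thesis by (simp add: nth_append)
  next
    case False
    with Suc.prems(2) have "l = L" by simp
    with len show ?thesis by (simp add: nth_append)
  qed
qed simp

lemma asg2_concat_block_ren:
  assumes "length y = m" "\<forall>l<L. length (B l) = n" "l < L" "v < n + m"
  shows "asg2 m y (concat (map B [0..<L])) (block_ren n m l v) = asg2 n (B l) y v"
  using assms nth_concat_blocks[OF assms(2,3), of v]
  by (auto simp: asg2_def block_ren_def)

lemma holds2_block_pattern_fm:
  assumes "is_formula2 n m \<phi>" "length y = m" "\<forall>l<L. length (B l) = n"
  shows "holds2 M m (block_pattern_fm n m \<phi> L Q P) y (concat (map B [0..<L])) \<longleftrightarrow>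
    (\<forall>l\<in>Q \<inter> {..<L}. holds2 M n \<phi> (B l) y \<longleftrightarrow> l \<in> P)"
proof -
  have "sat M (asg2 m y (concat (map B [0..<L])) \<circ> block_ren n m l) \<phi> \<longleftrightarrow> holds2 M n \<phi> (B l) y"
    if "l < L" for l
    unfolding holds2_def
    using assms that by (intro sat_cong) (auto simp: is_formula2_def asg2_concat_block_ren)
  then show ?thesis
    by (auto simp: holds2_def block_pattern_fm_def sat_conj_list sat_lit sat_rename_fm[OF inj_block_ren])
qed

lemma Ramsey_finite_range:
  fixes f :: "'a set \<Rightarrow> 'c"
  assumes "infinite Z" "finite (range f)"
  obtains Y where "Y \<subseteq> Z" "infinite Y" "\<And>X X'. X \<in> [Y]\<^bsup>r\<^esup> \<Longrightarrow> X' \<in> [Y]\<^bsup>r\<^esup> \<Longrightarrow> f X = f X'"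
proof -
  obtain e where e: "bij_betw e (range f) {0..<card (range f)}"
    using ex_bij_betw_finite_nat[OF assms(2)] by blast
  then have "(e \<circ> f) ` [Z]\<^bsup>r\<^esup> \<subseteq> {..<card (range f)}"
    by (auto simp: bij_betw_def)
  then obtain Y t where Y: "Y \<subseteq> Z" "infinite Y" "(e \<circ> f) ` [Y]\<^bsup>r\<^esup> \<subseteq> {t}"
    using Ramsey_nsets[OF assms(1)] by metis
  have "f X = f X'" if "X \<in> [Y]\<^bsup>r\<^esup>" "X' \<in> [Y]\<^bsup>r\<^esup>" for X X'
    using Y(3) that bij_betw_imp_inj_on[OF e] by (auto simp: inj_on_def)
  with Y show thesis
    using that by blast
qed

lemma sorted_list_of_set_strict_mono_on_image:
  assumes "strict_mono_on {1..N} g"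
  shows "sorted_list_of_set (g ` {1..N}) = map g [1..<Suc N]"
proof -
  have "sorted_wrt (<) (map g [1..<Suc N])"
    unfolding sorted_wrt_map
    by (rule sorted_wrt_mono_rel[OF _ sorted_wrt_upt]) (use assms in \<open>auto simp: strict_mono_on_def\<close>)
  moreover have "card (g ` {1..N}) = N"
    using card_image[OF strict_mono_on_imp_inj_on[OF assms]] by simp
  ultimately show ?thesis
    by (subst sorted_list_of_set_unique[symmetric]) (auto simp: atLeastLessThanSuc_atLeastAtMost)
qed

lemma Ramsey_strict_mono_tuples:
  fixes c :: "(nat \<Rightarrow> nat) \<Rightarrow> 'c"
  assumes "finite (range c)" and c_cong: "\<And>f g. \<forall>p\<in>{1..N}. f p = g p \<Longrightarrow> c f = c g"
  obtains h :: "nat \<Rightarrow> nat" where "strict_mono h"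
    "\<And>g g'. strict_mono_on {1..N} g \<Longrightarrow> strict_mono_on {1..N} g' \<Longrightarrow> c (h \<circ> g) = c (h \<circ> g')"
proof -
  define enum :: "nat set \<Rightarrow> nat \<Rightarrow> nat" where "enum X p = sorted_list_of_set X ! (p - 1)" for X p
  have fin: "finite (range (c \<circ> enum))"
    using assms(1) by (rule finite_subset[rotated]) auto
  obtain Y where Y: "infinite Y"
    and hom: "\<And>X X'. X \<in> [Y]\<^bsup>N\<^esup> \<Longrightarrow> X' \<in> [Y]\<^bsup>N\<^esup> \<Longrightarrow> (c \<circ> enum) X = (c \<circ> enum) X'"
    by (rule Ramsey_finite_range[OF infinite_UNIV_nat fin]) blast
  define h where "h = enumerate Y"
  have h: "strict_mono h"
    unfolding h_def using Y by (rule strict_mono_enumerate)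
  have hY: "h i \<in> Y" for i
    unfolding h_def using Y by (rule enumerate_in_set)
  have c_hg: "c (h \<circ> g) = (c \<circ> enum) ((h \<circ> g) ` {1..N})"
    and hg_nsets: "(h \<circ> g) ` {1..N} \<in> [Y]\<^bsup>N\<^esup>"
    if g: "strict_mono_on {1..N} g" for g
  proof -
    have hg: "strict_mono_on {1..N} (h \<circ> g)"
      using g h by (auto simp: strict_mono_on_def strict_mono_def)
    have "enum ((h \<circ> g) ` {1..N}) p = (h \<circ> g) p" if "p \<in> {1..N}" for p
      unfolding enum_def sorted_list_of_set_strict_mono_on_image[OF hg]
      using that by (subst nth_map_upt) auto
    then show "c (h \<circ> g) = (c \<circ> enum) ((h \<circ> g) ` {1..N})"
      unfolding comp_apply[of c] by (intro c_cong) simp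
    show "(h \<circ> g) ` {1..N} \<in> [Y]\<^bsup>N\<^esup>"
      using card_image[OF strict_mono_on_imp_inj_on[OF hg]] hY by (auto simp: nsets_def)
  qed
  show thesis
  proof (rule that[OF h])
    fix g g' :: "nat \<Rightarrow> nat"
    assume g: "strict_mono_on {1..N} g" and g': "strict_mono_on {1..N} g'"
    have "c (h \<circ> g) = (c \<circ> enum) ((h \<circ> g) ` {1..N})" by (rule c_hg[OF g])
    also have "\<dots> = (c \<circ> enum) ((h \<circ> g') ` {1..N})" by (rule hom[OF hg_nsets[OF g] hg_nsets[OF g']])
    also have "\<dots> = c (h \<circ> g')" by (rule c_hg[OF g', symmetric])
    finally show "c (h \<circ> g) = c (h \<circ> g')" .
  qed
qed

definition pattern_solutions ::
  "('a, 'f, 'p) struct \<Rightarrow> nat \<Rightarrow> nat \<Rightarrow> ('f, 'p) fm \<Rightarrow> nat set \<Rightarrow> nat set \<Rightarrow> (nat \<Rightarrow> 'a list) \<Rightarrow>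
    'a list set" where
  "pattern_solutions M n m \<phi> Q P x =
     {y. tuple M m y \<and> (\<forall>p\<in>Q. holds2 M n \<phi> (x p) y \<longleftrightarrow> p \<in> P)}"

definition pattern_realized ::
  "('a, 'f, 'p) struct \<Rightarrow> nat \<Rightarrow> nat \<Rightarrow> ('f, 'p) fm \<Rightarrow> nat \<Rightarrow> nat set \<Rightarrow> (nat \<Rightarrow> 'a list) \<Rightarrow> bool" where
  "pattern_realized M n m \<phi> N P x \<longleftrightarrow> pattern_solutions M n m \<phi> {1..N} P x \<noteq> {}"

lemma pattern_realized_cong:
  "\<forall>k\<in>{1..N}. x k = x' k \<Longrightarrow> pattern_realized M n m \<phi> N P x \<longleftrightarrow> pattern_realized M n m \<phi> N P x'"
  by (simp add: pattern_realized_def pattern_solutions_def)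

lemma pattern_homogeneous_subsequence:
  fixes a :: "nat \<Rightarrow> 'a list"
  obtains h :: "nat \<Rightarrow> nat" where "strict_mono h"
    "\<And>P g g'. P \<subseteq> {1..N} \<Longrightarrow> strict_mono_on {1..N} g \<Longrightarrow> strict_mono_on {1..N} g' \<Longrightarrow>
      pattern_realized M n m \<phi> N P (a \<circ> h \<circ> g) \<Longrightarrow> pattern_realized M n m \<phi> N P (a \<circ> h \<circ> g')"
proof -
  define c where "c g = {P \<in> Pow {1..N}. pattern_realized M n m \<phi> N P (a \<circ> g)}" for g :: "nat \<Rightarrow> nat"
  have fin: "finite (range c)"
    by (rule finite_subset[of _ "Pow (Pow {1..N})"]) (auto simp: c_def)
  have c_cong: "c f = c g" if "\<forall>p\<in>{1..N}. f p = g p" for f g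
  proof -
    have agree: "\<forall>k\<in>{1..N}. (a \<circ> f) k = (a \<circ> g) k"
      using that by simp
    show ?thesis
      by (simp only: c_def pattern_realized_cong[OF agree])
  qed
  obtain h :: "nat \<Rightarrow> nat" where h: "strict_mono h"
    and hom: "\<And>g g'. strict_mono_on {1..N} g \<Longrightarrow> strict_mono_on {1..N} g' \<Longrightarrow> c (h \<circ> g) = c (h \<circ> g')"
    using Ramsey_strict_mono_tuples[OF fin c_cong] by metis
  show thesis
  proof (rule that[OF h])
    fix P and g g' :: "nat \<Rightarrow> nat"
    assume "P \<subseteq> {1..N}" "strict_mono_on {1..N} g" "strict_mono_on {1..N} g'"
      "pattern_realized M n m \<phi> N P (a \<circ> h \<circ> g)"
    then show "pattern_realized M n m \<phi> N P (a \<circ> h \<circ> g')"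
      using hom[of g g'] by (auto simp: c_def comp_assoc)
  qed
qed

lemma pattern_realized_initial_segment:
  fixes g :: "nat \<Rightarrow> nat"
  assumes "\<forall>i j. holds2 M n \<phi> (a i) (b j) \<longleftrightarrow> i < j" "\<forall>j. tuple M m (b j)"
    and g: "strict_mono_on {1..N} g" and "t \<le> N"
  shows "pattern_realized M n m \<phi> N {1..t} (a \<circ> g)"
proof -
  define j where "j = (if t = 0 then 0 else Suc (g t))"
  have "g k < j \<longleftrightarrow> k \<in> {1..t}" if "k \<in> {1..N}" for k
    using that \<open>t \<le> N\<close> strict_mono_on_less_eq[OF g, of k t] by (auto simp: j_def)
  with assms(1,2) have "b j \<in> pattern_solutions M n m \<phi> {1..N} {1..t} (a \<circ> g)"
    by (auto simp: pattern_solutions_def)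
  then show ?thesis
    unfolding pattern_realized_def by blast
qed

lemma gap_of_non_initial_segment:
  assumes "P \<subseteq> {1..N}" "\<forall>t\<le>N. P \<noteq> {1..t}"
  obtains k where "1 \<le> k" "Suc k \<le> N" "k \<notin> P" "Suc k \<in> P"
proof -
  have fin: "finite P"
    using assms(1) finite_subset by blast
  moreover have "P \<noteq> {}"
    using assms(2) by fastforce
  ultimately have t: "Max P \<in> P" "Max P \<le> N" "P \<subseteq> {1..Max P}"
    using assms(1) by auto
  define G where "G = {j \<in> {1..Max P}. j \<notin> P}"
  have "G \<noteq> {}"
    using assms(2) t by (auto simp: G_def)
  moreover have "finite G"
    by (simp add: G_def)
  ultimately have k: "Max G \<in> G" and k_max: "\<And>j. j \<in> G \<Longrightarrow> j \<le> Max G"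
    by simp_all
  then have "Suc (Max G) \<le> Max P"
    using t(1) by (auto simp: G_def le_less)
  moreover have "Suc (Max G) \<notin> G"
    using k_max[of "Suc (Max G)"] by auto
  ultimately have "Suc (Max G) \<in> P"
    by (simp add: G_def)
  with k \<open>Suc (Max G) \<le> Max P\<close> t(2) show thesis
    by (intro that) (auto simp: G_def)
qed

lemma adjacent_swap_from_good_to_bad:
  fixes Good :: "nat set \<Rightarrow> bool"
  assumes "\<And>t. t \<le> N \<Longrightarrow> Good {1..t}" "E \<subseteq> {1..N}" "\<not> Good E"
  obtains P k where "P \<subseteq> {1..N}" "1 \<le> k" "Suc k \<le> N" "k \<notin> P" "Suc k \<in> P"
    "\<not> Good P" "Good (insert k (P - {Suc k}))"
proof -
  (* Take a bad pattern of least weight: moving one of its elements down by one gives a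
     pattern of smaller weight, which must therefore be good. *)
  define Bad where "Bad P \<longleftrightarrow> P \<subseteq> {1..N} \<and> \<not> Good P" for P
  obtain P where P: "Bad P" and least: "\<And>P'. Bad P' \<Longrightarrow> \<Sum>P \<le> \<Sum>P'"
    using ex_has_least_nat[of Bad E Sum] assms(2,3) by (auto simp: Bad_def)
  then have P_sub: "P \<subseteq> {1..N}" and "\<not> Good P"
    by (simp_all add: Bad_def)
  then have "\<forall>t\<le>N. P \<noteq> {1..t}"
    using assms(1) by auto
  then obtain k where k: "1 \<le> k" "Suc k \<le> N" "k \<notin> P" "Suc k \<in> P"
    by (rule gap_of_non_initial_segment[OF P_sub])
  define S where "S = insert k (P - {Suc k})"
  have "finite P"
    using P_sub finite_subset by blast
  then have "\<Sum>S < \<Sum>P"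
    using k by (simp add: S_def sum.remove[of P "Suc k"])
  then have "\<not> Bad S"
    using least by fastforce
  moreover have "S \<subseteq> {1..N}"
    using P_sub k by (auto simp: S_def)
  ultimately show thesis
    using that P_sub k \<open>\<not> Good P\<close> by (auto simp: S_def Bad_def)
qed

(* Position k is moved to index k + u and the positions after it beyond K, so that moving k
   from k + u to k + u + 1 keeps the positions increasing for u < K. *)
definition shift_pos :: "nat \<Rightarrow> nat \<Rightarrow> nat \<Rightarrow> nat \<Rightarrow> nat" where
  "shift_pos k K u p = (if p < k then p else if p = k then k + u else p + K)"

lemma pattern_solutions_strict_chain:
  fixes x :: "nat \<Rightarrow> 'a list"
  assumes k: "1 \<le> k" "Suc k \<le> N" "k \<notin> P" "Suc k \<in> P" and "i < K"
    and P_omitted: "\<And>g. strict_mono_on {1..N} g \<Longrightarrow> \<not> pattern_realized M n m \<phi> N P (x \<circ> g)"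
    and S_realized: "\<And>g. strict_mono_on {1..N} g \<Longrightarrow>
      pattern_realized M n m \<phi> N (insert k (P - {Suc k})) (x \<circ> g)"
  shows "pattern_solutions M n m \<phi> ({1..N} - {Suc k}) P (x \<circ> shift_pos k K i) \<subset>
    pattern_solutions M n m \<phi> ({1..N} - {Suc k}) P (x \<circ> shift_pos k K (Suc i))"
    (is "?D i \<subset> ?D (Suc i)")
proof -
  define g where "g = (shift_pos k K i)(Suc k := k + Suc i)"
  have g: "strict_mono_on {1..N} g"
    using \<open>i < K\<close> by (auto simp: strict_mono_on_def g_def shift_pos_def)
  have g_pos: "g p = shift_pos k K i p" if "p \<noteq> Suc k" for p
    using that by (simp add: g_def)
  have pos_Suc: "shift_pos k K (Suc i) p = shift_pos k K i p" if "p \<noteq> k" for p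
    using that by (simp add: shift_pos_def)
  have pos_Suc_k: "shift_pos k K (Suc i) k = g (Suc k)"
    by (simp add: g_def shift_pos_def)
  have sub: "y \<in> ?D (Suc i)" if y: "y \<in> ?D i" for y
  proof -
    have "\<not> holds2 M n \<phi> (x (g (Suc k))) y"
    proof
      assume "holds2 M n \<phi> (x (g (Suc k))) y"
      then have "holds2 M n \<phi> (x (g p)) y \<longleftrightarrow> p \<in> P" if "p \<in> {1..N}" for p
        using that y k(4) by (cases "p = Suc k") (auto simp: pattern_solutions_def g_pos)
      then show False
        using P_omitted[OF g] y by (auto simp: pattern_realized_def pattern_solutions_def)
    qed
    then have "holds2 M n \<phi> (x (shift_pos k K (Suc i) p)) y \<longleftrightarrow> p \<in> P"
      if "p \<in> {1..N} - {Suc k}" for p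
      using that y k(3) by (cases "p = k") (simp_all add: pattern_solutions_def pos_Suc pos_Suc_k)
    then show ?thesis
      using y by (simp add: pattern_solutions_def)
  qed
  obtain y where "tuple M m y"
    and y: "\<And>p. p \<in> {1..N} \<Longrightarrow> holds2 M n \<phi> (x (g p)) y \<longleftrightarrow> p \<in> insert k (P - {Suc k})"
    using S_realized[OF g] by (auto simp: pattern_realized_def pattern_solutions_def)
  moreover have "holds2 M n \<phi> (x (shift_pos k K (Suc i) p)) y \<longleftrightarrow> p \<in> P"
    if "p \<in> {1..N} - {Suc k}" for p
    using that y[of p] y[of "Suc k"] k by (cases "p = k") (simp_all add: g_pos pos_Suc pos_Suc_k)
  ultimately have "y \<in> ?D (Suc i)"
    by (simp add: pattern_solutions_def)
  moreover have "y \<notin> ?D i"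
    using y[of k] k by (auto simp: pattern_solutions_def g_pos)
  ultimately show ?thesis
    using sub by blast
qed

lemma Th_has_SOP_of_adjacent_swap:
  fixes x :: "nat \<Rightarrow> 'a list"
  assumes \<phi>: "is_formula2 n m \<phi>" and x: "\<And>i. tuple M n (x i)"
    and k: "1 \<le> k" "Suc k \<le> N" "k \<notin> P" "Suc k \<in> P"
    and P_omitted: "\<And>g. strict_mono_on {1..N} g \<Longrightarrow> \<not> pattern_realized M n m \<phi> N P (x \<circ> g)"
    and S_realized: "\<And>g. strict_mono_on {1..N} g \<Longrightarrow>
      pattern_realized M n m \<phi> N (insert k (P - {Suc k})) (x \<circ> g)"
  shows "Th_has_SOP M"
proof -
  define \<theta> where "\<theta> = block_pattern_fm n m \<phi> (Suc N) ({1..N} - {Suc k}) P"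
  have "\<exists>c. (\<forall>i\<le>K. tuple M (Suc N * n) (c i)) \<and>
      (\<forall>i<K. defset M m \<theta> (c i) \<subset> defset M m \<theta> (c (Suc i)))" for K
  proof -
    define c where "c u = concat (map (\<lambda>p. x (shift_pos k K u p)) [0..<Suc N])" for u
    have blocks: "\<forall>l<Suc N. length (x (shift_pos k K u l)) = n" for u
      using x by (simp add: tuple_def)
    have "defset M m \<theta> (c u) = pattern_solutions M n m \<phi> ({1..N} - {Suc k}) P (x \<circ> shift_pos k K u)" for u
      using holds2_block_pattern_fm[OF \<phi> _ blocks]
      by (auto simp: defset_def pattern_solutions_def tuple_def \<theta>_def c_def)
    then have "defset M m \<theta> (c i) \<subset> defset M m \<theta> (c (Suc i))" if "i < K" for i
      using pattern_solutions_strict_chain[OF k that P_omitted S_realized] by simp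
    moreover have "tuple M (Suc N * n) (c u)" for u
      using length_concat_blocks[OF blocks] x by (auto simp: tuple_def c_def)
    ultimately show ?thesis
      by blast
  qed
  moreover have "is_formula2 m (Suc N * n) \<theta>"
    unfolding \<theta>_def by (rule is_formula2_block_pattern_fm[OF \<phi>])
  ultimately show ?thesis
    unfolding Th_has_SOP_def by blast
qed

theorem theorem2p6:
  fixes M :: "('a, 'f, 'p) struct" and \<phi> :: "('f, 'p) fm"
    and n m N :: nat and E :: "nat set" and a b :: "nat \<Rightarrow> 'a list"
  assumes "is_struct M"
    and "is_formula2 n m \<phi>"
    and "\<forall>i. tuple M n (a i)"
    and "\<forall>j. tuple M m (b j)"
    and "E \<subseteq> {1..N}"
    and "\<forall>idx. strict_mono_on {1..N} idx \<longrightarrow>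
           \<not> (\<exists>y. tuple M m y \<and> (\<forall>k\<in>E. holds2 M n \<phi> (a (idx k)) y) \<and>
                 (\<forall>k\<in>{1..N} - E. \<not> holds2 M n \<phi> (a (idx k)) y))"
    and "\<forall>i j. holds2 M n \<phi> (a i) (b j) \<longleftrightarrow> i < j"
  shows "Th_has_SOP M"
proof -
  obtain h :: "nat \<Rightarrow> nat" where h: "strict_mono h"
    and hom: "\<And>P g g'. P \<subseteq> {1..N} \<Longrightarrow> strict_mono_on {1..N} g \<Longrightarrow> strict_mono_on {1..N} g' \<Longrightarrow>
      pattern_realized M n m \<phi> N P (a \<circ> h \<circ> g) \<Longrightarrow> pattern_realized M n m \<phi> N P (a \<circ> h \<circ> g')"
    using pattern_homogeneous_subsequence by metis
  have h_g: "strict_mono_on {1..N} (h \<circ> g)" if "strict_mono_on {1..N} g" for g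
    using h that by (auto simp: strict_mono_on_def strict_mono_def)
  define Good where
    "Good P \<longleftrightarrow> (\<forall>g. strict_mono_on {1..N} g \<longrightarrow> pattern_realized M n m \<phi> N P (a \<circ> h \<circ> g))" for P
  have "Good {1..t}" if "t \<le> N" for t
    using pattern_realized_initial_segment[OF assms(7,4) h_g that] by (simp add: Good_def comp_assoc)
  moreover have "\<not> Good E"
  proof -
    have "\<not> pattern_realized M n m \<phi> N E (a \<circ> h \<circ> id)"
      using assms(5) assms(6)[rule_format, OF h_g[OF strict_mono_on_id]]
      unfolding pattern_realized_def pattern_solutions_def by (simp; blast)
    then show ?thesis
      using strict_mono_on_id unfolding Good_def by blast
  qed
  ultimately obtain P k where P: "P \<subseteq> {1..N}" and k: "1 \<le> k" "Suc k \<le> N" "k \<notin> P" "Suc k \<in> P"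
    and "\<not> Good P" and "Good (insert k (P - {Suc k}))"
    using adjacent_swap_from_good_to_bad[OF _ assms(5)] by metis
  moreover have "\<not> pattern_realized M n m \<phi> N P (a \<circ> h \<circ> g)" if "strict_mono_on {1..N} g" for g
    using hom[OF P that] \<open>\<not> Good P\<close> unfolding Good_def by blast
  ultimately show ?thesis
    using assms(2,3) by (intro Th_has_SOP_of_adjacent_swap[where x = "a \<circ> h" and P = P and k = k])
      (auto simp: Good_def)
qed

end
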